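(* In the contention game with $n=3$ players and $k=2$ channels under acknowledgement-based feedback, the anonymous protocol $f^2$ (in every slot, regardless of history, a pending player transmits on channel 1 with probability $1/2$ and on channel 2 with probability $1/2$, and never stays idle) is an equilibrium protocol, and the expected latency of each player under it is $8/3$.
   Context: Contention game: $n$ players, channel set $K=\{1,\dots,k\}$, discrete time slots $t=1,2,\dots$. Each player has one packet; initially all players are pending. In each slot a pending player chooses (possibly at random) an action in $A=\{0,1,\dots,k\}$, where $0$ means no transmission and $a\in K$ means transmitting on channel $a$. If exactly one player transmits on a channel in a slot, her transmission succeeds and she leaves the game; if two or more transmit on the same channel they collide, all fail and remain pending. $X_{i,t}$ is player $i$'s action at slot $t$ and $h_{i,t}=(X_{i,1},\dots,X_{i,t})$ her personal history. A protocol for player $i$ is a sequence of decision rules, the rule for slot $t$ mapping the information available to $i$ to a probability distribution on $A$. The latency $T_i$ of player $i$ is the slot in which she transmits successfully; each player wants to minimize her expected latency. Acknowledgement-based feedback: after a slot, only a player who attempted transmission learns whether she succeeded; decision rules depend only on the personal history $h_{i,t-1}$. A profile $(f_1,\dots,f_n)$ is an equilibrium if for every player $i$, every slot $t$ and every history, player $i$ cannot decrease her expected latency (conditional on that history) by unilaterally deviating to another protocol from $t$ on. An anonymous protocol is one used by all players whose decision rules do not depend on the player's identity; it is an equilibrium protocol if the profile in which all players use it is an equilibrium. *)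

theory Defs
  imports "HOL-Probability.Probability"
begin

text \<open>Players are 0,...,n-1; actions are naturals, 0 = idle, a in {1..k} = transmit on channel a.
  A protocol (decision rules) maps the personal history (list of own past actions; its length
  is t-1 for slot t) to a distribution over actions.
  A global state records, for each player, Some h if she is pending with personal history h,
  and None if she already transmitted successfully (or is not a player).\<close>

type_synonym protocol = "nat list \<Rightarrow> nat pmf"
type_synonym gstate = "nat \<Rightarrow> nat list option"

definition valid_protocol :: "nat \<Rightarrow> protocol \<Rightarrow> bool" where
  "valid_protocol k g \<longleftrightarrow> (\<forall>h. set_pmf (g h) \<subseteq> {0..k})"

definition succeeds :: "nat set \<Rightarrow> (nat \<Rightarrow> nat) \<Rightarrow> nat \<Rightarrow> bool" where
  "succeeds P a j \<longleftrightarrow> a j \<noteq> 0 \<and> (\<forall>j'\<in>P. j' \<noteq> j \<longrightarrow> a j' \<noteq> a j)"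

definition step :: "nat \<Rightarrow> (nat \<Rightarrow> protocol) \<Rightarrow> gstate \<Rightarrow> gstate pmf" where
  "step n F \<sigma> =
     (let P = {j. j < n \<and> \<sigma> j \<noteq> None} in
      map_pmf (\<lambda>a j. if j \<in> P then (if succeeds P a j then None else Some (the (\<sigma> j) @ [a j]))
                      else None)
              (Pi_pmf P 0 (\<lambda>j. F j (the (\<sigma> j)))))"

primrec state_after :: "nat \<Rightarrow> (nat \<Rightarrow> protocol) \<Rightarrow> nat \<Rightarrow> gstate pmf" where
  "state_after n F 0 = return_pmf (\<lambda>j. if j < n then Some [] else None)"
| "state_after n F (Suc s) = bind_pmf (state_after n F s) (step n F)"

text \<open>Expected latency of player i conditional on the event H that she is pending at the
  beginning of slot length h + 1 with personal history h.  Computed via the tail-sum formula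
  E[T 1_H] = sum_s P(T > s and H), where for s < length h the event is H itself and for
  s >= length h it is: pending after s slots with history extending h.  (Value in ennreal, so
  infinite latency is allowed.)\<close>
definition cond_latency :: "nat \<Rightarrow> (nat \<Rightarrow> protocol) \<Rightarrow> nat \<Rightarrow> nat list \<Rightarrow> ennreal" where
  "cond_latency n F i h =
     (\<Sum>s. ennreal (measure_pmf.prob (state_after n F (max s (length h)))
                      {\<sigma>. \<exists>h'. \<sigma> i = Some h' \<and> take (length h) h' = h}))
     / ennreal (measure_pmf.prob (state_after n F (length h)) {\<sigma>. \<sigma> i = Some h})"

definition expected_latency :: "nat \<Rightarrow> (nat \<Rightarrow> protocol) \<Rightarrow> nat \<Rightarrow> ennreal" where
  "expected_latency n F i = cond_latency n F i []"

text \<open>Conditioning on the personal history h is realised by letting the player play h: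
  since the others' behaviour depends only on their own histories, this gives the
  conditional law given h (and it makes sense also for histories off the equilibrium path).\<close>
definition force :: "nat list \<Rightarrow> protocol \<Rightarrow> protocol" where
  "force h g = (\<lambda>h'. if length h' < length h then return_pmf (h ! length h') else g h')"

definition is_equilibrium :: "nat \<Rightarrow> nat \<Rightarrow> (nat \<Rightarrow> protocol) \<Rightarrow> bool" where
  "is_equilibrium n k F \<longleftrightarrow>
     (\<forall>i<n. \<forall>h. set h \<subseteq> {0..k} \<longrightarrow>
        measure_pmf.prob (state_after n (F(i := force h (F i))) (length h)) {\<sigma>. \<sigma> i = Some h} > 0 \<longrightarrow>
        (\<forall>g. valid_protocol k g \<longrightarrow>
           cond_latency n (F(i := force h (F i))) i h \<le> cond_latency n (F(i := force h g)) i h))"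

definition equilibrium_protocol :: "nat \<Rightarrow> nat \<Rightarrow> protocol \<Rightarrow> bool" where
  "equilibrium_protocol n k f \<longleftrightarrow> valid_protocol k f \<and> is_equilibrium n k (\<lambda>_. f)"

definition f2 :: protocol where
  "f2 = (\<lambda>h. pmf_of_set {1, 2})"

end

theory Submission
  imports Defs
begin

text \<open>Let \<open>V m\<close> be the expected remaining latency of a pending player facing \<open>m\<close> other
  pending players when everybody plays \<open>f\<^sup>2\<close>: \<open>V 0 = 1\<close>, \<open>V 1 = 2\<close>, \<open>V 2 = 8/3\<close>.  Against
  opponents playing \<open>f\<^sup>2\<close>, the potential \<open>V m\<close> of player \<open>i\<close> satisfies a Bellman inequality:
  whatever she does in a slot, her potential is at most one plus its expected value after the
  slot, with equality whenever she transmits (idling is never better).  Summing over the slots,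
  the expected latency of \<open>i\<close> after a history \<open>h\<close> is at least her expected potential when \<open>h\<close>
  is reached, whatever protocol she follows from then on, with equality for \<open>f\<^sup>2\<close>; in the
  initial state the potential is \<open>V 2 = 8/3\<close>.\<close>

section \<open>One slot with three players\<close>

definition triple :: "nat \<Rightarrow> nat \<Rightarrow> nat \<Rightarrow> nat \<Rightarrow> nat" where
  "triple a0 a1 a2 = (\<lambda>j. if j = 0 then a0 else if j = 1 then a1 else if j = 2 then a2 else 0)"

lemma Pi_pmf_three:
  "Pi_pmf {0,1,2} (0::nat) Q =
     bind_pmf (Q 0) (\<lambda>a0. bind_pmf (Q 1) (\<lambda>a1. bind_pmf (Q 2) (\<lambda>a2. return_pmf (triple a0 a1 a2))))"
proof -
  have "(\<lambda>_. 0)(2 := a2, Suc 0 := a1, 0 := a0) = triple a0 a1 a2" for a0 a1 a2 :: nat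
    by (auto simp: triple_def)
  then show ?thesis
    by (simp add: Pi_pmf_insert' bind_return_pmf bind_assoc_pmf del: fun_upd_apply)
qed

lemma nn_integral_measure_pmf_finite_support:
  fixes u :: "'a \<Rightarrow> real"
  assumes "finite S" "set_pmf M \<subseteq> S" "\<And>x. 0 \<le> u x"
  shows "(\<integral>\<^sup>+x. u x \<partial>M) = ennreal (\<Sum>x\<in>S. u x * pmf M x)"
proof -
  have "(\<integral>\<^sup>+x. u x \<partial>M) = (\<Sum>x\<in>S. ennreal (u x) * pmf M x)"
    using assms by (intro nn_integral_measure_pmf_support) (auto simp: set_pmf_eq)
  also have "\<dots> = (\<Sum>x\<in>S. ennreal (u x * pmf M x))"
    using assms by (simp add: ennreal_mult)
  also have "\<dots> = ennreal (\<Sum>x\<in>S. u x * pmf M x)"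
    using assms by simp
  finally show ?thesis .
qed

lemma nn_integral_Pi_pmf_three:
  fixes \<phi> :: "(nat \<Rightarrow> nat) \<Rightarrow> real"
  assumes "finite S" "\<And>j. j \<in> {0,1,2} \<Longrightarrow> set_pmf (Q j) \<subseteq> S" "\<And>a. 0 \<le> \<phi> a"
  shows "(\<integral>\<^sup>+a. \<phi> a \<partial>Pi_pmf {0,1,2} 0 Q) =
     ennreal (\<Sum>a0\<in>S. \<Sum>a1\<in>S. \<Sum>a2\<in>S.
       \<phi> (triple a0 a1 a2) * pmf (Q 2) a2 * pmf (Q 1) a1 * pmf (Q 0) a0)"
  unfolding Pi_pmf_three using assms
  by (simp add: nn_integral_measure_pmf_finite_support sum_nonneg sum_distrib_right)

definition pending :: "gstate \<Rightarrow> nat set" where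
  "pending \<sigma> = set [j \<leftarrow> [0, 1, 2]. \<sigma> j \<noteq> None]"

lemma mem_pending: "j \<in> pending \<sigma> \<longleftrightarrow> j < 3 \<and> \<sigma> j \<noteq> None"
proof -
  have "j < 3 \<longleftrightarrow> j \<in> {0, 1, 2}"
    by auto
  then show ?thesis
    by (auto simp: pending_def)
qed

definition outcome :: "gstate \<Rightarrow> (nat \<Rightarrow> nat) \<Rightarrow> gstate" where
  "outcome \<sigma> a = (\<lambda>j. if j \<in> pending \<sigma> then
      (if succeeds (pending \<sigma>) a j then None else Some (the (\<sigma> j) @ [a j])) else None)"

lemma step_three: "step 3 F \<sigma> = map_pmf (outcome \<sigma>) (Pi_pmf {0,1,2} 0 (\<lambda>j. F j (the (\<sigma> j))))"
proof -
  have pending: "{j. j < 3 \<and> \<sigma> j \<noteq> None} = pending \<sigma>"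
    by (auto simp: mem_pending)
  have restrict: "Pi_pmf (pending \<sigma>) 0 Q =
      map_pmf (\<lambda>f j. if j \<in> pending \<sigma> then f j else 0) (Pi_pmf {0,1,2} 0 Q)"
    for Q :: "nat \<Rightarrow> nat pmf"
    by (rule Pi_pmf_subset) (auto simp: mem_pending)
  show ?thesis
    unfolding step_def Let_def pending restrict map_pmf_comp
    by (intro map_pmf_cong refl ext) (auto simp: outcome_def succeeds_def)
qed

section \<open>The potential and its Bellman inequality\<close>

definition others_pending :: "nat \<Rightarrow> gstate \<Rightarrow> nat" where
  "others_pending i \<sigma> = length [j \<leftarrow> [0, 1, 2]. j \<noteq> i \<and> \<sigma> j \<noteq> None]"

definition latency_with_others :: "nat \<Rightarrow> real" where
  "latency_with_others m = (if m = 0 then 1 else if m = 1 then 2 else 8/3)"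

text \<open>The expected value of \<^const>\<open>latency_with_others\<close> after one slot in which a pending player
  takes action \<open>a\<close> while her \<open>m\<close> pending opponents play \<open>f\<^sup>2\<close>.  For instance, when she transmits
  against two opponents, exactly one of them uses her channel with probability 1/2 (the other
  one then succeeds) and both do with probability 1/4.\<close>
definition continuation_value :: "nat \<Rightarrow> nat \<Rightarrow> real" where
  "continuation_value m a =
     (if a = 0 then
        (if m \<le> 1 then latency_with_others 0
         else (latency_with_others 2 + latency_with_others 0) / 2)
      else
        (if m = 0 then 0
         else if m = 1 then latency_with_others 1 / 2
         else latency_with_others 1 / 2 + latency_with_others 2 / 4))"

lemma latency_with_others_le_continuation: "latency_with_others m \<le> 1 + continuation_value m a"
  by (simp add: continuation_value_def latency_with_others_def)

lemma latency_with_others_transmit: "a \<noteq> 0 \<Longrightarrow> 1 + continuation_value m a = latency_with_others m"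
  by (simp add: continuation_value_def latency_with_others_def)

definition pending_with_prefix :: "nat \<Rightarrow> nat list \<Rightarrow> gstate set" where
  "pending_with_prefix i h = {\<sigma>. \<exists>h'. \<sigma> i = Some h' \<and> take (length h) h' = h}"

definition potential :: "nat \<Rightarrow> nat list \<Rightarrow> gstate \<Rightarrow> real" where
  "potential i h \<sigma> = (case \<sigma> i of None \<Rightarrow> 0
     | Some h' \<Rightarrow> if take (length h) h' = h then latency_with_others (others_pending i \<sigma>) else 0)"

lemma potential_nonneg [simp]: "0 \<le> potential i h \<sigma>"
  by (auto simp: potential_def latency_with_others_def split: option.split)

lemma potential_le: "potential i h \<sigma> \<le> 8/3"
  by (auto simp: potential_def latency_with_others_def split: option.split)

lemma potential_eq_0: "\<sigma> \<notin> pending_with_prefix i h \<Longrightarrow> potential i h \<sigma> = 0"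
  by (auto simp: potential_def pending_with_prefix_def split: option.split)

lemma sum_three: "(\<Sum>a\<in>{0,1,2::nat}. g a) = g 0 + g 1 + g 2"
  by (simp add: add.assoc)

lemma take_length_append:
  assumes "take (length h) xs = h"
  shows "take (length h) (xs @ ys) = h"
proof -
  have "length h \<le> length xs" using assms length_take[of "length h" xs] by simp
  with assms show ?thesis by simp
qed

lemma potential_outcome_sum:
  fixes F :: "nat \<Rightarrow> protocol"
  assumes "i < 3" "\<sigma> i = Some old" "take (length h) old = h"
    and "\<forall>j. j \<noteq> i \<longrightarrow> F j = f2"
  shows "(\<Sum>a0\<in>{0,1,2}. \<Sum>a1\<in>{0,1,2}. \<Sum>a2\<in>{0,1,2}. potential i h (outcome \<sigma> (triple a0 a1 a2))
           * pmf (F 2 (the (\<sigma> 2))) a2 * pmf (F 1 (the (\<sigma> 1))) a1 * pmf (F 0 (the (\<sigma> 0))) a0)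
       = (\<Sum>a\<in>{0,1,2}. pmf (F i old) a * continuation_value (others_pending i \<sigma>) a)"
proof -
  have "take (length h) (old @ [a]) = h" for a
    using assms(3) by (rule take_length_append)
  note facts = this assms(2-4)
  note defs = f2_def potential_def outcome_def pending_def succeeds_def others_pending_def
    triple_def continuation_value_def latency_with_others_def
  consider "i = 0" | "i = 1" | "i = 2" using assms(1) by linarith
  then show ?thesis
  proof cases
    case 1
    with facts show ?thesis
      by (cases "\<sigma> 1"; cases "\<sigma> 2"; simp only: sum_three; simp add: defs)
  next
    case 2
    with facts show ?thesis
      by (cases "\<sigma> 0"; cases "\<sigma> 2"; simp only: sum_three; simp add: defs)
  next
    case 3
    with facts show ?thesis
      by (cases "\<sigma> 0"; cases "\<sigma> 1"; simp only: sum_three; simp add: defs)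
  qed
qed

lemma nn_integral_potential_step:
  fixes F :: "nat \<Rightarrow> protocol"
  assumes "i < 3" "\<sigma> i = Some old" "take (length h) old = h"
    and "\<forall>j. j \<noteq> i \<longrightarrow> F j = f2" "set_pmf (F i old) \<subseteq> {0..2}"
  shows "(\<integral>\<^sup>+\<sigma>'. potential i h \<sigma>' \<partial>step 3 F \<sigma>) =
    ennreal (\<Sum>a\<in>{0,1,2}. pmf (F i old) a * continuation_value (others_pending i \<sigma>) a)"
proof -
  have support: "set_pmf (F j (the (\<sigma> j))) \<subseteq> {0,1,2}" for j
    using assms(2,4,5) by (cases "j = i") (auto simp: f2_def)
  have "(\<integral>\<^sup>+\<sigma>'. potential i h \<sigma>' \<partial>step 3 F \<sigma>) =
      (\<integral>\<^sup>+a. potential i h (outcome \<sigma> a) \<partial>Pi_pmf {0,1,2} 0 (\<lambda>j. F j (the (\<sigma> j))))"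
    by (simp add: step_three)
  also have "\<dots> = ennreal (\<Sum>a0\<in>{0,1,2}. \<Sum>a1\<in>{0,1,2}. \<Sum>a2\<in>{0,1,2}.
      potential i h (outcome \<sigma> (triple a0 a1 a2))
        * pmf (F 2 (the (\<sigma> 2))) a2 * pmf (F 1 (the (\<sigma> 1))) a1 * pmf (F 0 (the (\<sigma> 0))) a0)"
    using support by (intro nn_integral_Pi_pmf_three) auto
  also have "\<dots> = ennreal (\<Sum>a\<in>{0,1,2}. pmf (F i old) a * continuation_value (others_pending i \<sigma>) a)"
    by (simp only: potential_outcome_sum[where i = i and \<sigma> = \<sigma> and F = F, OF assms(1-4)])
  finally show ?thesis .
qed

lemma potential_bellman:
  fixes F :: "nat \<Rightarrow> protocol"
  assumes "i < 3" "\<sigma> i = Some old" "take (length h) old = h"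
    and "\<forall>j. j \<noteq> i \<longrightarrow> F j = f2" "set_pmf (F i old) \<subseteq> {0..2}"
  shows "ennreal (potential i h \<sigma>) \<le> 1 + (\<integral>\<^sup>+\<sigma>'. potential i h \<sigma>' \<partial>step 3 F \<sigma>)"
    and "F i old = f2 old \<Longrightarrow> 1 + (\<integral>\<^sup>+\<sigma>'. potential i h \<sigma>' \<partial>step 3 F \<sigma>) = potential i h \<sigma>"
proof -
  let ?q = "pmf (F i old)" and ?m = "others_pending i \<sigma>"
  let ?R = "\<Sum>a\<in>{0,1,2}. ?q a * continuation_value ?m a"
  have "{0..2::nat} = {0,1,2}" by auto
  with assms(5) have total: "(\<Sum>a\<in>{0,1,2}. ?q a) = 1"
    using sum_pmf_eq_1[of "{0,1,2}" "F i old"] by simp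
  have potential: "potential i h \<sigma> = (\<Sum>a\<in>{0,1,2}. ?q a * latency_with_others ?m)"
    using assms(2,3) total by (simp add: potential_def sum_distrib_right[symmetric])
  have R: "1 + ?R = (\<Sum>a\<in>{0,1,2}. ?q a * (1 + continuation_value ?m a))"
    using total by (simp add: distrib_left sum.distrib)
  have "0 \<le> ?R"
    by (intro sum_nonneg mult_nonneg_nonneg) (auto simp: continuation_value_def latency_with_others_def)
  then have enn: "1 + ennreal ?R = ennreal (1 + ?R)"
    by simp
  have "potential i h \<sigma> \<le> 1 + ?R"
    unfolding potential R
    by (intro sum_mono mult_left_mono latency_with_others_le_continuation) auto
  then show "ennreal (potential i h \<sigma>) \<le> 1 + (\<integral>\<^sup>+\<sigma>'. potential i h \<sigma>' \<partial>step 3 F \<sigma>)"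
    unfolding nn_integral_potential_step[where i = i and \<sigma> = \<sigma> and F = F, OF assms] enn by (rule ennreal_leI)
  assume "F i old = f2 old"
  then have "?q 0 = 0" by (simp add: f2_def)
  then have "1 + ?R = potential i h \<sigma>"
    unfolding potential R by (simp add: sum_three latency_with_others_transmit)
  then show "1 + (\<integral>\<^sup>+\<sigma>'. potential i h \<sigma>' \<partial>step 3 F \<sigma>) = potential i h \<sigma>"
    unfolding nn_integral_potential_step[where i = i and \<sigma> = \<sigma> and F = F, OF assms] enn by simp
qed

lemma nn_integral_potential_step_eq_0:
  assumes "\<And>old. \<sigma> i = Some old \<Longrightarrow> length h \<le> length old \<and> take (length h) old \<noteq> h"
  shows "(\<integral>\<^sup>+\<sigma>'. potential i h \<sigma>' \<partial>step 3 F \<sigma>) = 0"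
proof -
  have "potential i h (outcome \<sigma> a) = 0" for a
  proof (cases "\<sigma> i")
    case None
    then have "outcome \<sigma> a i = None" by (simp add: outcome_def mem_pending)
    then show ?thesis by (simp add: potential_def)
  next
    case (Some old)
    with assms have "take (length h) (old @ [a i]) \<noteq> h" by simp
    with Some show ?thesis by (simp add: potential_def outcome_def)
  qed
  then show ?thesis by (simp add: step_three)
qed

lemma set_pmf_step_Some:
  assumes "\<sigma> \<in> set_pmf (step n F \<tau>)" "\<sigma> j = Some x"
  obtains y a where "\<tau> j = Some y" "x = y @ [a]"
  using assms by (auto simp: step_def Let_def split: if_splits)

lemma length_history_state_after:
  assumes "\<sigma> \<in> set_pmf (state_after n F s)" "\<sigma> j = Some x"
  shows "length x = s"
  using assms
proof (induction s arbitrary: \<sigma> x)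
  case 0
  then show ?case by (auto split: if_splits)
next
  case (Suc s)
  then obtain \<tau> where \<tau>: "\<tau> \<in> set_pmf (state_after n F s)" "\<sigma> \<in> set_pmf (step n F \<tau>)"
    by auto
  from \<tau>(2) Suc.prems(2) obtain y a where "\<tau> j = Some y" "x = y @ [a]"
    by (rule set_pmf_step_Some)
  with Suc.IH[OF \<tau>(1)] show ?case by simp
qed

lemma state_after_cong:
  assumes "\<And>j x. length x < s \<Longrightarrow> F j x = G j x"
  shows "state_after n F s = state_after n G s"
  using assms
proof (induction s)
  case 0
  show ?case by simp
next
  case (Suc s)
  then have IH: "state_after n F s = state_after n G s" by simp
  have "step n F \<sigma> = step n G \<sigma>" if \<sigma>: "\<sigma> \<in> set_pmf (state_after n G s)" for \<sigma>
    unfolding step_def Let_def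
  proof (intro arg_cong2[where f = map_pmf] refl Pi_pmf_cong)
    fix j assume "j \<in> {j. j < n \<and> \<sigma> j \<noteq> None}"
    then obtain x where x: "\<sigma> j = Some x" by auto
    from \<sigma> x have "length x = s" by (rule length_history_state_after)
    with x Suc.prems show "F j (the (\<sigma> j)) = G j (the (\<sigma> j))" by simp
  qed
  then show ?case
    by (simp only: state_after.simps) (rule bind_pmf_cong[OF IH])
qed

section \<open>Summing the Bellman inequality over time\<close>

lemma suminf_le_potential:
  fixes p w :: "nat \<Rightarrow> ennreal"
  assumes "\<And>s. p s + w (Suc s) \<le> w s"
  shows "(\<Sum>s. p s) \<le> w 0"
proof -
  have partial: "(\<Sum>s<n. p s) + w n \<le> w 0" for n
  proof (induction n)
    case (Suc n)
    have "(\<Sum>s<Suc n. p s) + w (Suc n) = (\<Sum>s<n. p s) + (p n + w (Suc n))"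
      by (simp add: add.assoc)
    also have "\<dots> \<le> (\<Sum>s<n. p s) + w n"
      using assms by (rule add_left_mono)
    also have "\<dots> \<le> w 0"
      by (rule Suc.IH)
    finally show ?case .
  qed simp
  have "(\<Sum>s<n. p s) \<le> w 0" for n
    using partial[of n] by (rule order_trans[rotated]) simp
  then show ?thesis
    by (rule suminf_le_const[OF summableI])
qed

lemma potential_le_suminf:
  fixes p :: "nat \<Rightarrow> real" and w :: "nat \<Rightarrow> ennreal"
  assumes nonneg: "\<And>s. 0 \<le> p s" and step: "\<And>s. w s \<le> ennreal (p s) + w (Suc s)"
    and bound: "\<And>s. w s \<le> ennreal (c * p s)"
  shows "w 0 \<le> (\<Sum>s. ennreal (p s))"
proof (cases "(\<Sum>s. ennreal (p s)) = \<top>")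
  case False
  have partial: "w 0 \<le> (\<Sum>s<n. ennreal (p s)) + w n" for n
  proof (induction n)
    case (Suc n)
    note Suc.IH
    also have "(\<Sum>s<n. ennreal (p s)) + w n \<le> (\<Sum>s<n. ennreal (p s)) + (ennreal (p n) + w (Suc n))"
      by (rule add_left_mono[OF step])
    also have "\<dots> = (\<Sum>s<Suc n. ennreal (p s)) + w (Suc n)"
      by (simp add: add.assoc)
    finally show ?case .
  qed simp
  from False have "summable p"
    by (rule summable_suminf_not_top[OF nonneg])
  \<comment> \<open>the potential vanishes in the limit since it is dominated by the summands\<close>
  then have "(\<lambda>n. (\<Sum>s<n. ennreal (p s)) + ennreal (c * p n)) \<longlonglongrightarrow> (\<Sum>s. ennreal (p s)) + ennreal (c * 0)"
    by (intro tendsto_add summable_LIMSEQ summableI tendsto_ennrealI tendsto_mult_left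
        summable_LIMSEQ_zero)
  moreover have "w 0 \<le> (\<Sum>s<n. ennreal (p s)) + ennreal (c * p n)" for n
    using partial[of n] add_left_mono[OF bound[of n]] by (rule order_trans)
  ultimately have "w 0 \<le> (\<Sum>s. ennreal (p s)) + ennreal (c * 0)"
    by (intro LIMSEQ_le_const) auto
  then show ?thesis by simp
qed simp

lemma suminf_max_eq:
  fixes f :: "nat \<Rightarrow> ennreal"
  shows "(\<Sum>s. f (max s L)) = of_nat L * f L + (\<Sum>s. f (s + L))"
proof -
  have "(\<Sum>s. f (max s L)) = (\<Sum>s. f (max (s + L) L)) + (\<Sum>s<L. f (max s L))"
    by (rule suminf_offset) simp
  also have "(\<Sum>s<L. f (max s L)) = (\<Sum>s<L. f L)"
    by (rule sum.cong) auto
  finally show ?thesis by (simp add: add.commute)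
qed

definition pending_prob :: "(nat \<Rightarrow> protocol) \<Rightarrow> nat \<Rightarrow> nat list \<Rightarrow> nat \<Rightarrow> real" where
  "pending_prob F i h s = measure_pmf.prob (state_after 3 F s) (pending_with_prefix i h)"

definition expected_potential :: "(nat \<Rightarrow> protocol) \<Rightarrow> nat \<Rightarrow> nat list \<Rightarrow> nat \<Rightarrow> ennreal" where
  "expected_potential F i h s = (\<integral>\<^sup>+\<sigma>. potential i h \<sigma> \<partial>state_after 3 F s)"

lemma cond_latency_eq:
  "cond_latency 3 F i h = (\<Sum>s. ennreal (pending_prob F i h (max s (length h))))
     / ennreal (measure_pmf.prob (state_after 3 F (length h)) {\<sigma>. \<sigma> i = Some h})"
  by (simp add: cond_latency_def pending_prob_def pending_with_prefix_def)

lemma expected_potential_le_pending_prob: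
  "expected_potential F i h s \<le> ennreal (8/3 * pending_prob F i h s)"
proof -
  have "expected_potential F i h s \<le>
      (\<integral>\<^sup>+\<sigma>. ennreal (8/3) * indicator (pending_with_prefix i h) \<sigma> \<partial>state_after 3 F s)"
    unfolding expected_potential_def
  proof (rule nn_integral_mono)
    fix \<sigma>
    show "ennreal (potential i h \<sigma>) \<le> ennreal (8/3) * indicator (pending_with_prefix i h) \<sigma>"
      using potential_le[of i h \<sigma>] potential_eq_0[of \<sigma> i h]
      by (cases "\<sigma> \<in> pending_with_prefix i h") (auto intro: ennreal_leI)
  qed
  also have "\<dots> = ennreal (8/3) * ennreal (pending_prob F i h s)"
    by (simp add: nn_integral_cmult_indicator pending_prob_def measure_pmf.emeasure_eq_measure)
  also have "\<dots> = ennreal (8/3 * pending_prob F i h s)"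
    by (rule ennreal_mult[symmetric]) (simp_all add: pending_prob_def)
  finally show ?thesis .
qed

lemma pending_prob_add_expected_potential_Suc:
  "ennreal (pending_prob F i h s) + expected_potential F i h (Suc s) =
   (\<integral>\<^sup>+\<sigma>. indicator (pending_with_prefix i h) \<sigma> + (\<integral>\<^sup>+\<sigma>'. potential i h \<sigma>' \<partial>step 3 F \<sigma>)
     \<partial>state_after 3 F s)"
proof -
  have "ennreal (pending_prob F i h s) =
      (\<integral>\<^sup>+\<sigma>. indicator (pending_with_prefix i h) \<sigma> \<partial>state_after 3 F s)"
    by (simp add: pending_prob_def measure_pmf.emeasure_eq_measure)
  then show ?thesis
    unfolding expected_potential_def by (simp add: nn_integral_add)
qed

lemma expected_potential_le_step:
  fixes F :: "nat \<Rightarrow> protocol"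
  assumes "i < 3" "\<forall>j. j \<noteq> i \<longrightarrow> F j = f2" "valid_protocol 2 (F i)"
  shows "expected_potential F i h s \<le> ennreal (pending_prob F i h s) + expected_potential F i h (Suc s)"
  unfolding pending_prob_add_expected_potential_Suc unfolding expected_potential_def
proof (rule nn_integral_mono)
  fix \<sigma>
  show "ennreal (potential i h \<sigma>) \<le>
      indicator (pending_with_prefix i h) \<sigma> + (\<integral>\<^sup>+\<sigma>'. potential i h \<sigma>' \<partial>step 3 F \<sigma>)"
  proof (cases "\<sigma> \<in> pending_with_prefix i h")
    case True
    then obtain old where "\<sigma> i = Some old" "take (length h) old = h"
      by (auto simp: pending_with_prefix_def)
    with assms have "ennreal (potential i h \<sigma>) \<le> 1 + (\<integral>\<^sup>+\<sigma>'. potential i h \<sigma>' \<partial>step 3 F \<sigma>)"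
      by (intro potential_bellman(1)) (auto simp: valid_protocol_def)
    with True show ?thesis by simp
  next
    case False
    then show ?thesis by (simp add: potential_eq_0)
  qed
qed

lemma pending_prob_add_expected_potential_Suc_le:
  fixes F :: "nat \<Rightarrow> protocol"
  assumes "i < 3" "\<forall>j. j \<noteq> i \<longrightarrow> F j = f2"
    and "length h \<le> s" "\<And>x. length x = s \<Longrightarrow> F i x = f2 x"
  shows "ennreal (pending_prob F i h s) + expected_potential F i h (Suc s) \<le> expected_potential F i h s"
  unfolding pending_prob_add_expected_potential_Suc unfolding expected_potential_def
proof (rule nn_integral_mono_AE, unfold AE_measure_pmf_iff, intro ballI)
  fix \<sigma> assume \<sigma>: "\<sigma> \<in> set_pmf (state_after 3 F s)"
  show "indicator (pending_with_prefix i h) \<sigma> + (\<integral>\<^sup>+\<sigma>'. potential i h \<sigma>' \<partial>step 3 F \<sigma>)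
      \<le> ennreal (potential i h \<sigma>)"
  proof (cases "\<sigma> \<in> pending_with_prefix i h")
    case True
    then obtain old where old: "\<sigma> i = Some old" "take (length h) old = h"
      by (auto simp: pending_with_prefix_def)
    from \<sigma> old(1) have "length old = s" by (rule length_history_state_after)
    then have "F i old = f2 old" by (rule assms(4))
    with assms(1,2) old have "1 + (\<integral>\<^sup>+\<sigma>'. potential i h \<sigma>' \<partial>step 3 F \<sigma>) = potential i h \<sigma>"
      by (intro potential_bellman(2)) (auto simp: f2_def)
    with True show ?thesis by simp
  next
    case False
    have "length h \<le> length old \<and> take (length h) old \<noteq> h" if "\<sigma> i = Some old" for old
      using False that length_history_state_after[OF \<sigma> that] assms(3)
      by (auto simp: pending_with_prefix_def)
    then have "(\<integral>\<^sup>+\<sigma>'. potential i h \<sigma>' \<partial>step 3 F \<sigma>) = 0"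
      by (rule nn_integral_potential_step_eq_0)
    with False show ?thesis by (simp add: potential_eq_0)
  qed
qed

lemma suminf_pending_prob_le_expected_potential:
  fixes F :: "nat \<Rightarrow> protocol"
  assumes "i < 3" "\<forall>j. j \<noteq> i \<longrightarrow> F j = f2" "\<And>x. length h \<le> length x \<Longrightarrow> F i x = f2 x"
  shows "(\<Sum>s. ennreal (pending_prob F i h (s + length h))) \<le> expected_potential F i h (length h)"
proof -
  have "ennreal (pending_prob F i h (s + length h)) + expected_potential F i h (Suc (s + length h))
      \<le> expected_potential F i h (s + length h)" for s
    by (rule pending_prob_add_expected_potential_Suc_le) (use assms in auto)
  then have "ennreal (pending_prob F i h (s + length h)) + expected_potential F i h (Suc s + length h)
      \<le> expected_potential F i h (s + length h)" for s
    by simp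
  from suminf_le_potential[where p = "\<lambda>s. ennreal (pending_prob F i h (s + length h))"
      and w = "\<lambda>s. expected_potential F i h (s + length h)", OF this]
  show ?thesis by simp
qed

lemma expected_potential_le_suminf_pending_prob:
  fixes F :: "nat \<Rightarrow> protocol"
  assumes "i < 3" "\<forall>j. j \<noteq> i \<longrightarrow> F j = f2" "valid_protocol 2 (F i)"
  shows "expected_potential F i h t \<le> (\<Sum>s. ennreal (pending_prob F i h (s + t)))"
proof -
  have nonneg: "0 \<le> pending_prob F i h (s + t)" for s
    by (simp add: pending_prob_def)
  have step: "expected_potential F i h (s + t)
      \<le> ennreal (pending_prob F i h (s + t)) + expected_potential F i h (Suc s + t)" for s
    using expected_potential_le_step[OF assms] by simp
  have bound: "expected_potential F i h (s + t) \<le> ennreal (8/3 * pending_prob F i h (s + t))" for s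
    by (rule expected_potential_le_pending_prob)
  from potential_le_suminf[where p = "\<lambda>s. pending_prob F i h (s + t)"
      and w = "\<lambda>s. expected_potential F i h (s + t)", OF nonneg step bound]
  show ?thesis by simp
qed

section \<open>Equilibrium and latency of \<open>f\<^sup>2\<close>\<close>

definition deviate :: "nat \<Rightarrow> nat list \<Rightarrow> protocol \<Rightarrow> nat \<Rightarrow> protocol" where
  "deviate i h g = (\<lambda>_. f2)(i := force h g)"

lemma valid_protocol_force:
  assumes "set h \<subseteq> {0..k}" "valid_protocol k g"
  shows "valid_protocol k (force h g)"
  using assms nth_mem by (fastforce simp: valid_protocol_def force_def)

lemma cond_latency_deviate_f2_le:
  assumes "i < 3" "set h \<subseteq> {0..2}" "valid_protocol 2 g"
  shows "cond_latency 3 (deviate i h f2) i h \<le> cond_latency 3 (deviate i h g) i h"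
proof -
  let ?L = "length h" and ?F = "deviate i h f2" and ?G = "deviate i h g"
  let ?p = "\<lambda>F s. ennreal (pending_prob F i h s)"
  have same: "state_after 3 ?F ?L = state_after 3 ?G ?L"
    by (rule state_after_cong) (simp add: deviate_def force_def)
  have "(\<Sum>s. ?p ?F (max s ?L)) = of_nat ?L * ?p ?F ?L + (\<Sum>s. ?p ?F (s + ?L))"
    by (rule suminf_max_eq)
  also have "\<dots> \<le> of_nat ?L * ?p ?F ?L + expected_potential ?F i h ?L"
    using assms(1) by (intro add_left_mono suminf_pending_prob_le_expected_potential)
      (auto simp: deviate_def force_def)
  also have "\<dots> = of_nat ?L * ?p ?G ?L + expected_potential ?G i h ?L"
    by (simp add: pending_prob_def expected_potential_def same)
  also have "\<dots> \<le> of_nat ?L * ?p ?G ?L + (\<Sum>s. ?p ?G (s + ?L))"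
    using assms by (intro add_left_mono expected_potential_le_suminf_pending_prob)
      (auto simp: deviate_def valid_protocol_force)
  also have "\<dots> = (\<Sum>s. ?p ?G (max s ?L))"
    by (rule suminf_max_eq[symmetric])
  finally show ?thesis
    unfolding cond_latency_eq same by (rule divide_right_mono_ennreal)
qed

lemma expected_latency_f2:
  assumes "i < 3"
  shows "expected_latency 3 (\<lambda>_. f2) i = ennreal (8/3)"
proof -
  let ?F = "\<lambda>_. f2"
  have "others_pending i (\<lambda>j. if j < 3 then Some [] else None) = 2"
    using assms by (cases "i = 0"; cases "i = 1") (auto simp: others_pending_def)
  then have start: "expected_potential ?F i [] 0 = ennreal (8/3)"
    by (simp add: expected_potential_def potential_def latency_with_others_def assms)
  have "(\<Sum>s. ennreal (pending_prob ?F i [] s)) \<le> expected_potential ?F i [] 0"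
    using suminf_pending_prob_le_expected_potential[of i ?F "[]"] assms by simp
  moreover have "expected_potential ?F i [] 0 \<le> (\<Sum>s. ennreal (pending_prob ?F i [] s))"
    using expected_potential_le_suminf_pending_prob[of i ?F "[]" 0] assms
    by (simp add: valid_protocol_def f2_def)
  ultimately show ?thesis
    using assms start by (simp add: expected_latency_def cond_latency_eq divide_ennreal_def)
qed

theorem theorem1:
  shows "equilibrium_protocol 3 2 f2 \<and> (\<forall>i<3. expected_latency 3 (\<lambda>_. f2) i = ennreal (8/3))"
proof
  show "equilibrium_protocol 3 2 f2"
    unfolding equilibrium_protocol_def is_equilibrium_def
  proof (intro conjI allI impI)
    show "valid_protocol 2 f2" by (simp add: valid_protocol_def f2_def)
    fix i :: nat and h :: "nat list" and g :: protocol
    assume "i < 3" "set h \<subseteq> {0..2}" "valid_protocol 2 g"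
    then show "cond_latency 3 ((\<lambda>_. f2)(i := force h ((\<lambda>_. f2) i))) i h
        \<le> cond_latency 3 ((\<lambda>_. f2)(i := force h g)) i h"
      using cond_latency_deviate_f2_le by (simp add: deviate_def)
  qed
  show "\<forall>i<3. expected_latency 3 (\<lambda>_. f2) i = ennreal (8/3)"
    using expected_latency_f2 by blast
qed

end
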